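(* Let $R$ be an $n\times n$ irreducible nonnegative matrix with positive left and right eigenvectors $u$ and $v$ for the PF eigenvalue $1$, normalized so that $\langle u,v\rangle=1$. Define $A=D_u^{1/2}D_v^{-1/2}RD_u^{-1/2}D_v^{1/2}$. Then: (1) $\phi(A)=\phi(R)$; (2) $\lambda_i(A)=\lambda_i(R)$ for every $i$; (3) $\|A\|_2=1$; (4) if $R$ is reversible, i.e. $D_uRD_v=D_vR^TD_u$, then $A$ is symmetric.
   Context: $D_x$ denotes the diagonal matrix with the vector $x$ on its diagonal; square roots are entrywise positive. $\|\cdot\|_2$ is the operator norm. For an irreducible nonnegative $H$ with positive PF left/right eigenvectors $u',v'$ (for $A$ these are both $w=D_u^{1/2}D_v^{1/2}\mathbf 1$), the edge expansion is $\phi(H)=\min\phi_S(H)$ over nonempty $S\subseteq[n]$ with $\sum_{i\in S}u'_iv'_i\le\frac12\sum_iu'_iv'_i$, where $\phi_S(H)=\langle\mathbf 1_S,D_{u'}HD_{v'}\mathbf 1_{\overline S}\rangle/\langle\mathbf 1_S,D_{u'}HD_{v'}\mathbf 1\rangle$ and $\mathbf 1_S$ is the indicator vector of $S$. Eigenvalues are listed as $\lambda_1>\operatorname{Re}\lambda_2\ge\dots\ge\operatorname{Re}\lambda_n$. *)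

theory Defs
  imports "HOL-Analysis.Analysis" "HOL-Computational_Algebra.Polynomial"
begin

definition diagm :: "real^'n \<Rightarrow> real^'n^'n" where
  "diagm x = (\<chi> i j. if i = j then x$i else 0)"

definition nonneg_mat :: "real^'n^'n \<Rightarrow> bool" where
  "nonneg_mat H \<longleftrightarrow> (\<forall>i j. H$i$j \<ge> 0)"

definition matpow :: "real^'n^'n \<Rightarrow> nat \<Rightarrow> real^'n^'n" where
  "matpow H k = (((**) H) ^^ k) (mat 1)"

definition irreducible_mat :: "real^'n^'n \<Rightarrow> bool" where
  "irreducible_mat H \<longleftrightarrow> (\<forall>i j. \<exists>k. matpow H k $i$j > 0)"

definition phiS :: "real^'n^'n \<Rightarrow> real^'n \<Rightarrow> real^'n \<Rightarrow> 'n set \<Rightarrow> real" where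
  "phiS H u' v' S =
     (\<Sum>i\<in>S. \<Sum>j\<in>-S. u'$i * H$i$j * v'$j) / (\<Sum>i\<in>S. \<Sum>j\<in>UNIV. u'$i * H$i$j * v'$j)"

definition edge_expansion :: "real^'n^'n \<Rightarrow> real^'n \<Rightarrow> real^'n \<Rightarrow> real" where
  "edge_expansion H u' v' =
     Min {phiS H u' v' S | S. S \<noteq> {} \<and>
            (\<Sum>i\<in>S. u'$i * v'$i) \<le> (1/2) * (\<Sum>i\<in>UNIV. u'$i * v'$i)}"

definition charpoly :: "real^'n^'n \<Rightarrow> complex poly" where
  "charpoly H = det (\<chi> i j. (if i = j then [:0, 1:] else 0) - [:complex_of_real (H$i$j):])"

definition eigenvalues :: "real^'n^'n \<Rightarrow> complex multiset" where
  "eigenvalues H = proots (charpoly H)"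

end

theory Submission
  imports Defs
begin

(* A is the diagonal similarity D_s R D_s^-1 with s = sqrt (u / v), so it has the characteristic
   polynomial of R, and w = sqrt (u v) = u / s = s v is both a left and a right Perron vector of A.
   Since D_w A D_w = D_u R D_v, the edge expansions agree, and reversibility of R is exactly the
   symmetry of D_u R D_v. The norm bound is the Schur test: Cauchy-Schwarz applied to each row with
   weights w gives |A x|^2 <= |x|^2, with equality at x = w. *)

lemma diagm_mult_left: "diagm x ** M = (\<chi> i j. x$i * M$i$j)"
proof -
  have "(\<Sum>k\<in>UNIV. (if i = k then x$i else 0) * M$k$j) = x$i * M$i$j" for i j
    by (simp add: if_distrib[of "\<lambda>z. z * _"] cong: if_cong)
  then show ?thesis by (simp add: vec_eq_iff matrix_matrix_mult_def diagm_def)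
qed

lemma diagm_mult_right: "M ** diagm x = (\<chi> i j. M$i$j * x$j)"
proof -
  have "(\<Sum>k\<in>UNIV. M$i$k * (if k = j then x$k else 0)) = M$i$j * x$j" for i j
    by (simp add: if_distrib[of "\<lambda>z. _ * z"] cong: if_cong)
  then show ?thesis by (simp add: vec_eq_iff matrix_matrix_mult_def diagm_def)
qed

lemma diagm_mult_diagm: "diagm x ** diagm y = diagm (\<chi> i. x$i * y$i)"
  unfolding diagm_mult_left by (simp add: diagm_def vec_eq_iff)

lemma det_mult_rows_cols:
  fixes M :: "'a::comm_ring_1^'n^'n"
  shows "det (\<chi> i j. c i * M$i$j * e j) = prod c UNIV * prod e UNIV * det M"
proof -
  have rows: "(\<chi> i j. c i * M$i$j * e j) = (\<chi> i. c i *s (\<chi> j. M$i$j * e j))"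
    by (simp add: vec_eq_iff mult.assoc)
  have cols: "transpose (\<chi> i j. M$i$j * e j) = (\<chi> j. e j *s transpose M $ j)"
    by (simp add: vec_eq_iff transpose_def mult.commute)
  have "det (\<chi> i j. M$i$j * e j) = det (transpose (\<chi> i j. M$i$j * e j))"
    by simp
  also have "\<dots> = prod e UNIV * det M"
    unfolding cols det_rows_mul by simp
  finally show ?thesis
    unfolding rows det_rows_mul by (simp add: mult.assoc)
qed

lemma Cauchy_Schwarz_ineq_sum_weighted:
  fixes a w x :: "'a \<Rightarrow> real"
  assumes "\<And>j. a j \<ge> 0" and "\<And>j. w j > 0"
  shows "(\<Sum>j\<in>J. a j * x j)\<^sup>2 \<le> (\<Sum>j\<in>J. a j * w j) * (\<Sum>j\<in>J. a j * (x j)\<^sup>2 / w j)"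
proof -
  have aw_nonneg: "a j * w j \<ge> 0" and a_div_w_nonneg: "a j / w j \<ge> 0" for j
    using assms[of j] by simp_all
  have "sqrt (a j * w j) * sqrt (a j / w j) = a j" for j
    using assms[of j] by (simp add: real_sqrt_mult[symmetric])
  then have "(\<Sum>j\<in>J. a j * x j)\<^sup>2 = (\<Sum>j\<in>J. sqrt (a j * w j) * (sqrt (a j / w j) * x j))\<^sup>2"
    by (simp add: mult.assoc[symmetric])
  also have "\<dots> \<le> (\<Sum>j\<in>J. (sqrt (a j * w j))\<^sup>2) * (\<Sum>j\<in>J. (sqrt (a j / w j) * x j)\<^sup>2)"
    by (rule Cauchy_Schwarz_ineq_sum)
  also have "\<dots> = (\<Sum>j\<in>J. a j * w j) * (\<Sum>j\<in>J. a j * (x j)\<^sup>2 / w j)"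
    using aw_nonneg a_div_w_nonneg by (simp add: power_mult_distrib)
  finally show ?thesis .
qed

lemma power2_norm_vec_eq_sum: "(norm x)\<^sup>2 = (\<Sum>i\<in>UNIV. (x$i)\<^sup>2)"
  for x :: "real^'n"
  unfolding power2_norm_eq_inner inner_vec_def by (simp add: power2_eq_square)

lemma norm_matrix_vector_mult_le_Schur:
  fixes A :: "real^'n^'m" and p :: "real^'m" and q :: "real^'n"
  assumes nonneg: "\<And>i j. A$i$j \<ge> 0" and q_pos: "\<And>j. q$j > 0"
    and right: "A *v q = p" and left: "p v* A = q"
  shows "norm (A *v x) \<le> norm x"
proof -
  have row_sum: "(\<Sum>j\<in>UNIV. A$i$j * q$j) = p$i" for i
    using arg_cong[OF right, of "\<lambda>y. y$i"] by (simp add: matrix_vector_mult_def)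
  have col_sum: "(\<Sum>i\<in>UNIV. p$i * A$i$j) = q$j" for j
    using arg_cong[OF left, of "\<lambda>y. y$j"] by (simp add: vector_matrix_mult_def)
  have row: "((A *v x)$i)\<^sup>2 \<le> p$i * (\<Sum>j\<in>UNIV. A$i$j * (x$j)\<^sup>2 / q$j)" for i
    unfolding row_sum[symmetric] matrix_vector_mult_def vec_lambda_beta
    by (rule Cauchy_Schwarz_ineq_sum_weighted) (simp_all add: nonneg q_pos)
  have "(norm (A *v x))\<^sup>2 \<le> (\<Sum>i\<in>UNIV. p$i * (\<Sum>j\<in>UNIV. A$i$j * (x$j)\<^sup>2 / q$j))"
    unfolding power2_norm_vec_eq_sum by (intro sum_mono row)
  also have "\<dots> = (\<Sum>i\<in>UNIV. \<Sum>j\<in>UNIV. p$i * A$i$j * (x$j)\<^sup>2 / q$j)"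
    by (simp add: sum_distrib_left mult.assoc)
  also have "\<dots> = (\<Sum>j\<in>UNIV. \<Sum>i\<in>UNIV. p$i * A$i$j * (x$j)\<^sup>2 / q$j)"
    by (rule sum.swap)
  also have "\<dots> = (\<Sum>j\<in>UNIV. (\<Sum>i\<in>UNIV. p$i * A$i$j) * (x$j)\<^sup>2 / q$j)"
    by (simp add: sum_distrib_right sum_divide_distrib)
  also have "\<dots> = (norm x)\<^sup>2"
    unfolding power2_norm_vec_eq_sum col_sum using q_pos by (simp add: less_imp_neq[symmetric])
  finally show ?thesis
    by (rule power2_le_imp_le) simp
qed

lemma onorm_eq_1_if_Perron_vector:
  fixes A :: "real^'n^'n"
  assumes "nonneg_mat A" and w_pos: "\<forall>i. w$i > 0"
    and right: "A *v w = w" and left: "w v* A = w"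
  shows "onorm (\<lambda>x. A *v x) = 1"
proof (rule antisym)
  show "onorm (\<lambda>x. A *v x) \<le> 1"
    using norm_matrix_vector_mult_le_Schur[OF _ _ right left] assms
    by (intro onorm_le) (simp add: nonneg_mat_def)
  have "w \<noteq> 0"
    using w_pos by (metis less_irrefl zero_index)
  moreover have "norm (A *v w) \<le> onorm (\<lambda>x. A *v x) * norm w"
    by (rule onorm) (rule matrix_vector_mul_bounded_linear)
  ultimately show "1 \<le> onorm (\<lambda>x. A *v x)"
    unfolding right by simp
qed

definition diag_similar :: "('n \<Rightarrow> real) \<Rightarrow> real^'n^'n \<Rightarrow> real^'n^'n" where
  "diag_similar s M = (\<chi> i j. s i * M$i$j / s j)"

lemma nonneg_mat_diag_similar:
  assumes "\<And>i. s i > 0" and "nonneg_mat M"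
  shows "nonneg_mat (diag_similar s M)"
  using assms by (simp add: nonneg_mat_def diag_similar_def less_imp_le)

lemma diag_similar_mult_vec:
  assumes "\<And>i. s i \<noteq> 0"
  shows "diag_similar s M *v (\<chi> i. s i * x$i) = (\<chi> i. s i * (M *v x)$i)"
  using assms
  by (simp add: vec_eq_iff matrix_vector_mult_def diag_similar_def sum_distrib_left)

lemma vec_mult_diag_similar:
  assumes "\<And>i. s i \<noteq> 0"
  shows "(\<chi> i. y$i / s i) v* diag_similar s M = (\<chi> j. (y v* M)$j / s j)"
  using assms
  by (simp add: vec_eq_iff vector_matrix_mult_def diag_similar_def sum_divide_distrib)

lemma charpoly_diag_similar:
  assumes "\<And>i. s i \<noteq> 0"
  shows "charpoly (diag_similar s M) = charpoly M"
proof -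
  define c where "c i = [:complex_of_real (s i):]" for i
  define e where "e i = [:complex_of_real (1 / s i):]" for i
  define X where "X = (\<chi> i j. (if i = j then [:0, 1:] else 0) - [:complex_of_real (M$i$j):])"
  have scale: "c i * p * e j = smult (complex_of_real (s i / s j)) p" for i j p
    by (simp add: c_def e_def mult.commute)
  have "(if i = j then [:0, 1:] else 0) - [:complex_of_real (diag_similar s M $i$j):]
      = c i * X$i$j * e j" for i j
    using assms[of i] assms[of j] unfolding scale by (simp add: X_def diag_similar_def)
  then have "charpoly (diag_similar s M) = det (\<chi> i j. c i * X$i$j * e j)"
    unfolding charpoly_def by (simp only:)
  also have "\<dots> = (\<Prod>i\<in>UNIV. c i * e i) * det X"
    by (simp add: det_mult_rows_cols prod.distrib)
  also have "(\<Prod>i\<in>UNIV. c i * e i) = 1"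
    using scale[of _ 1] assms by (simp flip: one_pCons)
  finally show ?thesis
    by (simp add: charpoly_def X_def)
qed

lemma edge_expansion_diag_similar:
  assumes "\<And>i. s i \<noteq> 0"
  shows "edge_expansion (diag_similar s M) (\<chi> i. u$i / s i) (\<chi> i. s i * v$i)
       = edge_expansion M u v"
proof -
  have entry: "u$i / s i * diag_similar s M $i$j * (s j * v$j) = u$i * M$i$j * v$j"
    and weight: "u$i / s i * (s i * v$i) = u$i * v$i" for i j
    using assms[of i] assms[of j] by (simp_all add: diag_similar_def)
  have "phiS (diag_similar s M) (\<chi> i. u$i / s i) (\<chi> i. s i * v$i) S = phiS M u v S" for S
    unfolding phiS_def by (simp only: vec_lambda_beta entry)
  then show ?thesis
    unfolding edge_expansion_def by (simp only: vec_lambda_beta weight)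
qed

lemma symmetric_diag_similar_if_reversible:
  assumes s: "\<And>i. s i \<noteq> 0" and v: "\<And>i. v$i \<noteq> 0" and su: "\<And>i. (s i)\<^sup>2 * v$i = u$i"
    and reversible: "diagm u ** M ** diagm v = diagm v ** transpose M ** diagm u"
  shows "transpose (diag_similar s M) = diag_similar s M"
proof -
  have "s j * M$j$i / s i = s i * M$i$j / s j" for i j
  proof -
    have "u$i * M$i$j * v$j = v$i * M$j$i * u$j"
      using arg_cong[OF reversible, of "\<lambda>N. N$i$j"]
      by (simp add: diagm_mult_left diagm_mult_right transpose_def)
    then have "((s i)\<^sup>2 * M$i$j) * (v$i * v$j) = ((s j)\<^sup>2 * M$j$i) * (v$i * v$j)"
      unfolding su[symmetric] by (simp only: ac_simps)
    then have "(s i)\<^sup>2 * M$i$j = (s j)\<^sup>2 * M$j$i"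
      using v[of i] v[of j] by simp
    then show ?thesis
      using s[of i] s[of j] by (simp add: field_simps power2_eq_square)
  qed
  then show ?thesis
    by (simp add: vec_eq_iff transpose_def diag_similar_def)
qed

lemma diagm_sqrt_conj_eq_diag_similar:
  "diagm (\<chi> i. sqrt (u$i)) ** diagm (\<chi> i. 1 / sqrt (v$i)) ** M
     ** diagm (\<chi> i. 1 / sqrt (u$i)) ** diagm (\<chi> i. sqrt (v$i))
   = diag_similar (\<lambda>i. sqrt (u$i) / sqrt (v$i)) M"
  unfolding diagm_mult_diagm unfolding diagm_mult_left diagm_mult_right
  by (simp add: diag_similar_def vec_eq_iff)

lemma sqrt_ratio_rescale:
  fixes a b :: real
  assumes "0 \<le> a" and "0 \<le> b"
  shows "a / (sqrt a / sqrt b) = sqrt a * sqrt b" and "sqrt a / sqrt b * b = sqrt a * sqrt b"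
proof -
  have "a / (sqrt a / sqrt b) = a / sqrt a * sqrt b"
    and "sqrt a / sqrt b * b = sqrt a * (b / sqrt b)"
    by simp_all
  then show "a / (sqrt a / sqrt b) = sqrt a * sqrt b" and "sqrt a / sqrt b * b = sqrt a * sqrt b"
    using assms by (simp_all only: real_div_sqrt)
qed

theorem lemma3p3:
  fixes R :: "real^'n^'n" and u v :: "real^'n"
  assumes "nonneg_mat R" and "irreducible_mat R"
    and "\<forall>i. u$i > 0" and "\<forall>i. v$i > 0"
    and "R *v v = v" and "u v* R = u"
    and "u \<bullet> v = 1"
  defines "A \<equiv> diagm (\<chi> i. sqrt (u$i)) ** diagm (\<chi> i. 1 / sqrt (v$i)) ** R
                 ** diagm (\<chi> i. 1 / sqrt (u$i)) ** diagm (\<chi> i. sqrt (v$i))"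
    and "w \<equiv> (\<chi> i. sqrt (u$i) * sqrt (v$i))"
  shows "edge_expansion A w w = edge_expansion R u v
         \<and> eigenvalues A = eigenvalues R
         \<and> onorm (\<lambda>x. A *v x) = 1
         \<and> (diagm u ** R ** diagm v = diagm v ** transpose R ** diagm u \<longrightarrow> transpose A = A)"
proof -
  define s where "s i = sqrt (u$i) / sqrt (v$i)" for i
  have u_pos: "u$i > 0" and v_pos: "v$i > 0" for i
    using assms(3,4) by auto
  then have v_nz: "v$i \<noteq> 0" for i
    by (metis less_irrefl)
  have s_pos: "s i > 0" and s_nz: "s i \<noteq> 0" and su: "(s i)\<^sup>2 * v$i = u$i" for i
    using u_pos[of i] v_pos[of i] by (simp_all add: s_def power_divide)
  have A_eq: "A = diag_similar s R"
    unfolding A_def s_def by (rule diagm_sqrt_conj_eq_diag_similar)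
  have "u$i / s i = w$i" and "s i * v$i = w$i" for i
    using sqrt_ratio_rescale[of "u$i" "v$i"] u_pos[of i] v_pos[of i] by (simp_all add: s_def w_def)
  then have w_left: "(\<chi> i. u$i / s i) = w" and w_right: "(\<chi> i. s i * v$i) = w"
    by (simp_all add: vec_eq_iff)
  have "edge_expansion A w w = edge_expansion R u v"
    using edge_expansion_diag_similar[of s R u v, OF s_nz] by (simp only: A_eq w_left w_right)
  moreover have "eigenvalues A = eigenvalues R"
    using charpoly_diag_similar[of s R, OF s_nz] by (simp add: eigenvalues_def A_eq)
  moreover have "onorm (\<lambda>x. A *v x) = 1"
  proof (rule onorm_eq_1_if_Perron_vector)
    show "nonneg_mat A"
      unfolding A_eq using s_pos assms(1) by (rule nonneg_mat_diag_similar)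
    show "\<forall>i. w$i > 0"
      using u_pos v_pos by (simp add: w_def)
    show "A *v w = w"
      using diag_similar_mult_vec[of s R v, OF s_nz] by (simp only: A_eq assms(5) w_right)
    show "w v* A = w"
      using vec_mult_diag_similar[of s u R, OF s_nz] by (simp only: A_eq assms(6) w_left)
  qed
  moreover have "transpose A = A"
    if "diagm u ** R ** diagm v = diagm v ** transpose R ** diagm u"
    unfolding A_eq using s_nz v_nz su that by (rule symmetric_diag_similar_if_reversible)
  ultimately show ?thesis
    by blast
qed

end
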